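(* Let $N_7$ be the connected, simply connected nilpotent Lie group with Lie algebra $\mathfrak{n}_7$ spanned by $X_1,\dots,X_7$ with non-trivial brackets $[X_1,X_3]=X_5,\ [X_1,X_4]=X_6,\ [X_1,X_5]=X_7,\ [X_2,X_3]=-X_6,\ [X_2,X_4]=X_5,\ [X_2,X_6]=X_7$. Let $(f_5^k)_k,(f_6^k)_k$ be sequences of nonzero real numbers with $\lim_k f_5^k=0$ and $\lim_k f_6^k=0$, and consider the sequence of coadjoint orbits $\mathcal O_k=\mathcal O_{(f_5^k,f_6^k)}$ in $\mathfrak{n}_7^*/N_7$. Then the set of limit points of $(\mathcal O_k)_k$ in $\mathfrak{n}_7^*/N_7$ is exactly $\Gamma_0$, the set of coadjoint orbits of functionals $f_1X_1^*+f_2X_2^*+f_3X_3^*+f_4X_4^*$, $(f_1,f_2,f_3,f_4)\in\mathbb R^4$.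
   Context: $N_7$ acts on $\mathfrak{n}_7^*$ by the coadjoint action $\mathrm{Ad}^*(g)f=f\circ\mathrm{Ad}(g^{-1})$, $X_1^*,\dots,X_7^*$ is the dual basis, and $\mathfrak{n}_7^*/N_7$ carries the quotient topology. The orbit $\mathcal O_{(f_5,f_6)}$ of $f_5X_5^*+f_6X_6^*$ (with $(f_5,f_6)\neq(0,0)$) equals $\{x_1X_1^*+x_2X_2^*+x_3X_3^*+x_4X_4^*+f_5X_5^*+f_6X_6^*: x_i\in\mathbb R\}$. Functionals vanishing on $X_5,X_6,X_7$ are fixed by the coadjoint action, so their orbits are singletons (these correspond to the unitary characters of $N_7$). *)

theory Defs
  imports "HOL-Analysis.Analysis" "HOL-Library.Numeral_Type"
begin

text \<open>The Lie algebra n_7 is modelled as real^7 in the basis X_1,...,X_7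
  (coordinate i of a vector is x $ i, for i = 1..7 in the index type 7),
  and its dual n_7^* as real^7 in the dual basis X_1^*,...,X_7^*, the pairing
  being the inner product.\<close>

type_synonym n7 = "real^7"
type_synonym n7dual = "real^7"

text \<open>Lie bracket, from the structure constants
  [X1,X3]=X5, [X1,X4]=X6, [X1,X5]=X7, [X2,X3]=-X6, [X2,X4]=X5, [X2,X6]=X7.\<close>
definition brkt :: "n7 \<Rightarrow> n7 \<Rightarrow> n7" where
  "brkt X Y = (\<chi> k.
     if k = 5 then X$1 * Y$3 - X$3 * Y$1 + X$2 * Y$4 - X$4 * Y$2
     else if k = 6 then X$1 * Y$4 - X$4 * Y$1 - (X$2 * Y$3 - X$3 * Y$2)
     else if k = 7 then X$1 * Y$5 - X$5 * Y$1 + X$2 * Y$6 - X$6 * Y$2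
     else 0)"

text \<open>N_7 is connected, simply connected and nilpotent, so exp : n_7 \<rightarrow> N_7 is
  a bijection; we parametrize N_7 by n_7 via g = exp X. Then
  Ad(exp X) = e^{ad X} = \<Sum>_k (ad X)^k / k!, a finite sum since ad X is
  nilpotent (ad X ^ 7 = 0 on the 7-dimensional nilpotent algebra).\<close>
definition Ad_exp :: "n7 \<Rightarrow> n7 \<Rightarrow> n7" where
  "Ad_exp X Y = (\<Sum>k<7. (1 / fact k) *\<^sub>R ((brkt X ^^ k) Y))"

text \<open>Coadjoint action: Ad^*(exp X) f = f \<circ> Ad(exp X)^{-1} = f \<circ> Ad(exp(-X)).\<close>
definition coad :: "n7 \<Rightarrow> n7dual \<Rightarrow> n7dual" where
  "coad X f = (\<chi> i. f \<bullet> Ad_exp (- X) (axis i 1))"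

definition coad_orbit :: "n7dual \<Rightarrow> n7dual set" where
  "coad_orbit f = {coad X f | X. True}"

definition orbit_space :: "n7dual set set" where
  "orbit_space = range coad_orbit"

definition quotient_topology :: "'a topology \<Rightarrow> ('a \<Rightarrow> 'b) \<Rightarrow> 'b set \<Rightarrow> 'b topology" where
  "quotient_topology X p Y =
     topology (\<lambda>U. U \<subseteq> Y \<and> openin X {x \<in> topspace X. p x \<in> U})"

definition orbit_top :: "n7dual set topology" where
  "orbit_top = quotient_topology euclidean coad_orbit orbit_space"

definition fun7 :: "real \<Rightarrow> real \<Rightarrow> real \<Rightarrow> real \<Rightarrow> real \<Rightarrow> real \<Rightarrow> real \<Rightarrow> n7dual" where
  "fun7 a1 a2 a3 a4 a5 a6 a7 = (\<chi> i.
     if i = 1 then a1 else if i = 2 then a2 else if i = 3 then a3 else if i = 4 then a4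
     else if i = 5 then a5 else if i = 6 then a6 else a7)"

end

theory Submission
  imports Defs
begin

text \<open>
  Ad^*(exp X) moves the coordinates f_1..f_4 by expressions in X that are linear in
  f_5, f_6, f_7, changes f_5, f_6 only by multiples of f_7, and fixes f_7. Hence f_7 is an orbit
  invariant, and so are f_5, f_6 on the hyperplane f_7 = 0, where the orbit of a functional with
  (f_5, f_6) \<noteq> (0, 0) is the whole plane over (f_5, f_6). Consequently the sets
  {f_7 \<noteq> 0 \<or> |f_5| > \<epsilon> \<or> |f_6| > \<epsilon>} are open and saturated, and they separate every orbit
  outside \<Gamma>_0 from the tail of the sequence. Conversely, the plane O_k contains
  (a_1, a_2, a_3, a_4, f_5^k, f_6^k, 0), which tends to (a_1, a_2, a_3, a_4, 0, 0, 0), and the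
  quotient map is continuous.
\<close>

lemma exhaust_7:
  fixes i :: 7
  shows "i = 1 \<or> i = 2 \<or> i = 3 \<or> i = 4 \<or> i = 5 \<or> i = 6 \<or> i = 7"
proof (induct i)
  case (of_int z)
  then have "z = 0 \<or> z = 1 \<or> z = 2 \<or> z = 3 \<or> z = 4 \<or> z = 5 \<or> z = 6" by fastforce
  then show ?case by auto
qed

lemma forall_7: "(\<forall>i::7. P i) \<longleftrightarrow> P 1 \<and> P 2 \<and> P 3 \<and> P 4 \<and> P 5 \<and> P 6 \<and> P 7"
  by (metis exhaust_7)

lemma UNIV_7: "UNIV = {1, 2, 3, 4, 5, 6, 7::7}"
  using exhaust_7 by auto

lemma sum_7: "sum f (UNIV::7 set) = f 1 + f 2 + f 3 + f 4 + f 5 + f 6 + f 7"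
  unfolding UNIV_7 by (simp add: ac_simps)

lemma fun7_nth [simp]:
  "fun7 a1 a2 a3 a4 a5 a6 a7 $ 1 = a1" "fun7 a1 a2 a3 a4 a5 a6 a7 $ 2 = a2"
  "fun7 a1 a2 a3 a4 a5 a6 a7 $ 3 = a3" "fun7 a1 a2 a3 a4 a5 a6 a7 $ 4 = a4"
  "fun7 a1 a2 a3 a4 a5 a6 a7 $ 5 = a5" "fun7 a1 a2 a3 a4 a5 a6 a7 $ 6 = a6"
  "fun7 a1 a2 a3 a4 a5 a6 a7 $ 7 = a7"
  by (simp_all add: fun7_def)

lemma fun7_eq_iff:
  "fun7 a1 a2 a3 a4 a5 a6 a7 = fun7 b1 b2 b3 b4 b5 b6 b7 \<longleftrightarrow>
     a1 = b1 \<and> a2 = b2 \<and> a3 = b3 \<and> a4 = b4 \<and> a5 = b5 \<and> a6 = b6 \<and> a7 = b7"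
  by (metis fun7_nth)

lemma fun7_nth_eta: "fun7 (f$1) (f$2) (f$3) (f$4) (f$5) (f$6) (f$7) = f"
  by (simp add: vec_eq_iff forall_7)

lemma tendsto_fun7 [tendsto_intros]:
  assumes "(a1 \<longlongrightarrow> b1) F" "(a2 \<longlongrightarrow> b2) F" "(a3 \<longlongrightarrow> b3) F" "(a4 \<longlongrightarrow> b4) F"
    "(a5 \<longlongrightarrow> b5) F" "(a6 \<longlongrightarrow> b6) F" "(a7 \<longlongrightarrow> b7) F"
  shows "((\<lambda>x. fun7 (a1 x) (a2 x) (a3 x) (a4 x) (a5 x) (a6 x) (a7 x))
           \<longlongrightarrow> fun7 b1 b2 b3 b4 b5 b6 b7) F"
proof (rule vec_tendstoI)
  fix i :: 7
  show "((\<lambda>x. fun7 (a1 x) (a2 x) (a3 x) (a4 x) (a5 x) (a6 x) (a7 x) $ i)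
          \<longlongrightarrow> fun7 b1 b2 b3 b4 b5 b6 b7 $ i) F"
    using exhaust_7 [of i] assms by auto
qed

lemma brkt_nth:
  "brkt X Y $ k =
     (if k = 5 then X$1 * Y$3 - X$3 * Y$1 + X$2 * Y$4 - X$4 * Y$2
      else if k = 6 then X$1 * Y$4 - X$4 * Y$1 - (X$2 * Y$3 - X$3 * Y$2)
      else if k = 7 then X$1 * Y$5 - X$5 * Y$1 + X$2 * Y$6 - X$6 * Y$2
      else 0)"
  by (simp add: brkt_def)

lemma brkt_funpow_eq_0:
  assumes "3 \<le> k"
  shows "(brkt X ^^ k) Y = 0"
  using assms
proof (induction k rule: dec_induct)
  case base
  show ?case by (simp add: numeral_3_eq_3 vec_eq_iff brkt_nth)
next
  case (step n)
  then show ?case by (simp add: vec_eq_iff brkt_nth)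
qed

lemma Ad_exp_eq: "Ad_exp X Y = Y + brkt X Y + (1/2) *\<^sub>R brkt X (brkt X Y)"
proof -
  have "Ad_exp X Y = (\<Sum>k<3. (1 / fact k) *\<^sub>R ((brkt X ^^ k) Y))"
    unfolding Ad_exp_def by (rule sum.mono_neutral_right) (auto simp: brkt_funpow_eq_0)
  then show ?thesis
    by (simp add: numeral_3_eq_3 numeral_2_eq_2 lessThan_Suc)
qed

lemma coad_eq:
  "coad X f = fun7
     (f$1 + f$5 * X$3 + f$6 * X$4 + f$7 * (X$5 - (X$1 * X$3 + X$2 * X$4) / 2))
     (f$2 + f$5 * X$4 - f$6 * X$3 + f$7 * (X$6 + (X$2 * X$3 - X$1 * X$4) / 2))
     (f$3 - f$5 * X$1 + f$6 * X$2 + f$7 * ((X$1)\<^sup>2 - (X$2)\<^sup>2) / 2)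
     (f$4 - f$5 * X$2 - f$6 * X$1 + f$7 * X$1 * X$2)
     (f$5 - f$7 * X$1)
     (f$6 - f$7 * X$2)
     (f$7)"
  unfolding vec_eq_iff forall_7
  by (simp add: coad_def Ad_exp_eq inner_vec_def sum_7 brkt_nth axis_def
      algebra_simps power2_eq_square) (simp add: field_simps)

lemma coad_0 [simp]: "coad 0 f = f"
  by (simp add: coad_eq fun7_nth_eta)

lemma mem_coad_orbit_iff: "g \<in> coad_orbit f \<longleftrightarrow> (\<exists>X. g = coad X f)"
  by (auto simp: coad_orbit_def)

lemma coad_orbit_self: "f \<in> coad_orbit f"
  unfolding mem_coad_orbit_iff by (metis coad_0)

lemma coad_orbit_eqD:
  assumes "coad_orbit g = coad_orbit f"
  shows "g$7 = f$7" and "f$7 = 0 \<Longrightarrow> g$5 = f$5 \<and> g$6 = f$6"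
proof -
  obtain X where "g = coad X f"
    using assms coad_orbit_self mem_coad_orbit_iff by metis
  then show "g$7 = f$7" and "f$7 = 0 \<Longrightarrow> g$5 = f$5 \<and> g$6 = f$6"
    by (simp_all add: coad_eq)
qed

lemma rotation_scaling_surj:
  fixes a b d1 d2 :: real
  assumes "a \<noteq> 0 \<or> b \<noteq> 0"
  shows "\<exists>u v. a * u + b * v = d1 \<and> a * v - b * u = d2"
proof -
  define D where "D = a\<^sup>2 + b\<^sup>2"
  have "D \<noteq> 0"
    using assms by (simp add: D_def sum_power2_eq_zero_iff)
  have "a * (a * d1 - b * d2) + b * (b * d1 + a * d2) = D * d1"
    and "a * (b * d1 + a * d2) - b * (a * d1 - b * d2) = D * d2"
    by (simp_all add: D_def algebra_simps power2_eq_square)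
  then have "a * ((a * d1 - b * d2) / D) + b * ((b * d1 + a * d2) / D) = D * d1 / D"
    and "a * ((b * d1 + a * d2) / D) - b * ((a * d1 - b * d2) / D) = D * d2 / D"
    by (simp_all only: times_divide_eq_right flip: add_divide_distrib diff_divide_distrib)
  then show ?thesis
    unfolding nonzero_mult_div_cancel_left[OF \<open>D \<noteq> 0\<close>] by blast
qed

text \<open>
  On f_7 = 0, an X with x_5 = x_6 = x_7 = 0 translates (f_1 + i f_2, f_3 + i f_4) by
  ((h_5 - i h_6)(x_3 + i x_4), -(h_5 + i h_6)(x_1 + i x_2)), and both multiplications are onto.
\<close>
lemma coad_orbit_generic_plane:
  assumes "h5 \<noteq> 0 \<or> h6 \<noteq> 0"
  shows "coad_orbit (fun7 a1 a2 a3 a4 h5 h6 0) = {fun7 y1 y2 y3 y4 h5 h6 0 | y1 y2 y3 y4. True}"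
proof (intro subset_antisym subsetI)
  fix g assume "g \<in> coad_orbit (fun7 a1 a2 a3 a4 h5 h6 0)"
  then show "g \<in> {fun7 y1 y2 y3 y4 h5 h6 0 | y1 y2 y3 y4. True}"
    by (auto simp: mem_coad_orbit_iff coad_eq)
next
  fix g assume "g \<in> {fun7 y1 y2 y3 y4 h5 h6 0 | y1 y2 y3 y4. True}"
  then obtain y1 y2 y3 y4 where g: "g = fun7 y1 y2 y3 y4 h5 h6 0" by blast
  obtain x3 x4 where x34: "h5 * x3 + h6 * x4 = y1 - a1" "h5 * x4 - h6 * x3 = y2 - a2"
    using rotation_scaling_surj assms by blast
  obtain x1 x2 where x12: "h5 * x1 + (- h6) * x2 = a3 - y3" "h5 * x2 - (- h6) * x1 = a4 - y4"
    using rotation_scaling_surj[of h5 "- h6" "a3 - y3" "a4 - y4"] assms by auto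
  have "coad (fun7 x1 x2 x3 x4 0 0 0) (fun7 a1 a2 a3 a4 h5 h6 0) = g"
    using x12 x34 by (simp add: g coad_eq fun7_eq_iff algebra_simps)
  then show "g \<in> coad_orbit (fun7 a1 a2 a3 a4 h5 h6 0)"
    unfolding mem_coad_orbit_iff by metis
qed

lemma openin_quotient_topology:
  "openin (quotient_topology X p Y) U \<longleftrightarrow> U \<subseteq> Y \<and> openin X {x \<in> topspace X. p x \<in> U}"
proof -
  have Int: "{x \<in> topspace X. p x \<in> S \<inter> T} = {x \<in> topspace X. p x \<in> S} \<inter> {x \<in> topspace X. p x \<in> T}"
    for S T by blast
  have Union: "{x \<in> topspace X. p x \<in> \<Union>\<K>} = \<Union>((\<lambda>S. {x \<in> topspace X. p x \<in> S}) ` \<K>)"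
    for \<K> by blast
  have "istopology (\<lambda>U. U \<subseteq> Y \<and> openin X {x \<in> topspace X. p x \<in> U})"
    unfolding istopology_def Int Union by auto
  then show ?thesis
    by (simp add: quotient_topology_def)
qed

lemma topspace_quotient_topology:
  assumes "p ` topspace X \<subseteq> Y"
  shows "topspace (quotient_topology X p Y) = Y"
proof (rule subset_antisym)
  show "topspace (quotient_topology X p Y) \<subseteq> Y"
    using openin_quotient_topology [of X p Y "topspace (quotient_topology X p Y)"] by simp
  have "{x \<in> topspace X. p x \<in> Y} = topspace X"
    using assms by blast
  then have "openin (quotient_topology X p Y) Y"
    by (simp add: openin_quotient_topology)
  then show "Y \<subseteq> topspace (quotient_topology X p Y)"
    by (rule openin_subset)
qed

lemma continuous_map_quotient_topology:
  assumes "p ` topspace X \<subseteq> Y"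
  shows "continuous_map X (quotient_topology X p Y) p"
  using assms
  by (simp add: continuous_map_def topspace_quotient_topology openin_quotient_topology
      image_subset_iff)

lemma openin_quotient_topology_image:
  assumes "openin X S" and "\<And>x. x \<in> topspace X \<Longrightarrow> p x \<in> p ` S \<Longrightarrow> x \<in> S"
    and "p ` S \<subseteq> Y"
  shows "openin (quotient_topology X p Y) (p ` S)"
proof -
  have "{x \<in> topspace X. p x \<in> p ` S} = S"
    using assms(1,2) openin_subset by blast
  then show ?thesis
    using assms by (simp add: openin_quotient_topology)
qed

lemma topspace_orbit_top: "topspace orbit_top = orbit_space"
  unfolding orbit_top_def orbit_space_def by (simp add: topspace_quotient_topology)

lemma limitin_orbit_top_imp_vanishes_on_derived:
  fixes y :: "'a \<Rightarrow> n7dual"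
  assumes "F \<noteq> bot"
    and lim: "limitin orbit_top (\<lambda>k. coad_orbit (y k)) (coad_orbit g) F"
    and y7: "\<And>k. y k $ 7 = 0"
    and y5: "((\<lambda>k. y k $ 5) \<longlongrightarrow> 0) F" and y6: "((\<lambda>k. y k $ 6) \<longlongrightarrow> 0) F"
  shows "g$5 = 0 \<and> g$6 = 0 \<and> g$7 = 0"
proof (rule ccontr)
  define S where "S \<epsilon> = {x :: n7dual. x$7 \<noteq> 0 \<or> \<epsilon> < \<bar>x$5\<bar> \<or> \<epsilon> < \<bar>x$6\<bar>}" for \<epsilon>
  assume g: "\<not> (g$5 = 0 \<and> g$6 = 0 \<and> g$7 = 0)"
  obtain \<epsilon> :: real where "\<epsilon> > 0" "g \<in> S \<epsilon>"
  proof (cases "g$7 = 0")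
    case True
    then show ?thesis
      using g by (intro that[of "(\<bar>g$5\<bar> + \<bar>g$6\<bar>) / 3"]) (auto simp: S_def)
  next
    case False
    then show ?thesis
      by (intro that[of 1]) (auto simp: S_def)
  qed
  have saturated: "x \<in> S \<epsilon>" if x: "coad_orbit x \<in> coad_orbit ` S \<epsilon>" for x
  proof -
    obtain z where "z \<in> S \<epsilon>" "coad_orbit x = coad_orbit z"
      using x by blast
    then show ?thesis
      using coad_orbit_eqD[of x z] unfolding S_def by auto
  qed
  have "openin orbit_top (coad_orbit ` S \<epsilon>)"
    unfolding orbit_top_def
  proof (rule openin_quotient_topology_image)
    show "openin euclidean (S \<epsilon>)"
      unfolding S_def Collect_disj_eq open_openin [symmetric]
      by (intro open_Un open_Collect_neq open_Collect_less continuous_intros)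
    show "coad_orbit ` S \<epsilon> \<subseteq> orbit_space"
      by (simp add: orbit_space_def image_mono)
  qed (rule saturated)
  then have "eventually (\<lambda>k. coad_orbit (y k) \<in> coad_orbit ` S \<epsilon>) F"
    using lim \<open>g \<in> S \<epsilon>\<close> unfolding limitin_def by blast
  then have "eventually (\<lambda>k. y k \<in> S \<epsilon>) F"
    by (rule eventually_mono) (rule saturated)
  moreover have "eventually (\<lambda>k. \<bar>y k $ 5\<bar> < \<epsilon> \<and> \<bar>y k $ 6\<bar> < \<epsilon>) F"
    using order_tendstoD(2)[OF tendsto_rabs_zero[OF y5] \<open>\<epsilon> > 0\<close>]
      order_tendstoD(2)[OF tendsto_rabs_zero[OF y6] \<open>\<epsilon> > 0\<close>]
    by (rule eventually_conj)
  ultimately have "eventually (\<lambda>k. False) F"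
    by eventually_elim (use y7 in \<open>auto simp: S_def\<close>)
  then show False
    using \<open>F \<noteq> bot\<close> by (simp add: eventually_False)
qed

lemma limitin_orbit_top_character_orbit:
  assumes "\<And>k. h5 k \<noteq> 0 \<or> h6 k \<noteq> 0" and "(h5 \<longlongrightarrow> 0) F" and "(h6 \<longlongrightarrow> 0) F"
  shows "limitin orbit_top (\<lambda>k. coad_orbit (fun7 0 0 0 0 (h5 k) (h6 k) 0))
           (coad_orbit (fun7 a1 a2 a3 a4 0 0 0)) F"
proof -
  have "continuous_map euclidean orbit_top coad_orbit"
    unfolding orbit_top_def orbit_space_def by (simp add: continuous_map_quotient_topology)
  moreover have "((\<lambda>k. fun7 a1 a2 a3 a4 (h5 k) (h6 k) 0) \<longlongrightarrow> fun7 a1 a2 a3 a4 0 0 0) F"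
    using assms(2,3) by (intro tendsto_intros)
  ultimately have "limitin orbit_top (\<lambda>k. coad_orbit (fun7 a1 a2 a3 a4 (h5 k) (h6 k) 0))
      (coad_orbit (fun7 a1 a2 a3 a4 0 0 0)) F"
    using continuous_map_limit by (fastforce simp: o_def)
  moreover have "coad_orbit (fun7 a1 a2 a3 a4 (h5 k) (h6 k) 0) =
      coad_orbit (fun7 0 0 0 0 (h5 k) (h6 k) 0)" for k
    using coad_orbit_generic_plane [OF assms(1)] by simp
  ultimately show ?thesis
    by simp
qed

theorem mainTheorem3:
  fixes f5 f6 :: "nat \<Rightarrow> real"
  assumes "\<And>k. f5 k \<noteq> 0" and "\<And>k. f6 k \<noteq> 0"
    and "f5 \<longlonglongrightarrow> 0" and "f6 \<longlonglongrightarrow> 0"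
  shows "{Orb \<in> topspace orbit_top.
            limitin orbit_top (\<lambda>k. coad_orbit (fun7 0 0 0 0 (f5 k) (f6 k) 0)) Orb sequentially}
         = {coad_orbit (fun7 a1 a2 a3 a4 0 0 0) | a1 a2 a3 a4. True}"
proof (intro subset_antisym subsetI)
  fix Orb
  assume "Orb \<in> {Orb \<in> topspace orbit_top.
            limitin orbit_top (\<lambda>k. coad_orbit (fun7 0 0 0 0 (f5 k) (f6 k) 0)) Orb sequentially}"
  then obtain g where Orb: "Orb = coad_orbit g"
    and lim: "limitin orbit_top (\<lambda>k. coad_orbit (fun7 0 0 0 0 (f5 k) (f6 k) 0)) (coad_orbit g) sequentially"
    by (auto simp: topspace_orbit_top orbit_space_def)
  have "g$5 = 0 \<and> g$6 = 0 \<and> g$7 = 0"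
    using limitin_orbit_top_imp_vanishes_on_derived [OF trivial_limit_sequentially lim] assms(3,4)
    by simp
  then have "Orb = coad_orbit (fun7 (g$1) (g$2) (g$3) (g$4) 0 0 0)"
    using Orb fun7_nth_eta [of g] by simp
  then show "Orb \<in> {coad_orbit (fun7 a1 a2 a3 a4 0 0 0) | a1 a2 a3 a4. True}"
    by blast
next
  fix Orb
  assume "Orb \<in> {coad_orbit (fun7 a1 a2 a3 a4 0 0 0) | a1 a2 a3 a4. True}"
  then obtain a1 a2 a3 a4 where "Orb = coad_orbit (fun7 a1 a2 a3 a4 0 0 0)"
    by blast
  then show "Orb \<in> {Orb \<in> topspace orbit_top.
            limitin orbit_top (\<lambda>k. coad_orbit (fun7 0 0 0 0 (f5 k) (f6 k) 0)) Orb sequentially}"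
    using limitin_orbit_top_character_orbit [of f5 f6] assms(1,3,4)
    by (simp add: topspace_orbit_top orbit_space_def)
qed

end
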